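(* Let $b>0$ and $c>0$ be constants, let $J\subset\mathbb{R}$ be an open interval, and let $a\in L^\infty(J)$ satisfy $0\le a(t)\le C$ for almost every $t\in J$, where $C\ge 0$ is a constant such that $$C< c\,\max\{c,\,2\sqrt b\}.$$ Then there exist constants $\delta>0$ and $M>0$ such that every solution $u\in W^{2,\infty}_{\mathrm{loc}}(J)$ of $$u''(t)+c\,u'(t)+\big(b+a(t)\big)u(t)=0\quad\text{for a.e. } t\in J$$ satisfies $$u(t)^2+u'(t)^2\le M\,\big[u(s)^2+u'(s)^2\big]\,e^{-\delta (t-s)}$$ for all $s,t\in J$ with $s\le t$. *)

theory Defs
  imports "HOL-Analysis.Analysis"
begin

text \<open>A function u lies in W^{2,inf}_loc(J) (J open) iff u is C^1 on J with locally
Lipschitz derivative u'; then u'' exists a.e. (Rademacher) and coincides with the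
weak second derivative.\<close>

definition W2inf_loc_solution ::
  "real set \<Rightarrow> real \<Rightarrow> real \<Rightarrow> (real \<Rightarrow> real) \<Rightarrow> (real \<Rightarrow> real) \<Rightarrow> (real \<Rightarrow> real) \<Rightarrow> bool" where
  "W2inf_loc_solution J b c a u u' \<longleftrightarrow>
     (\<forall>t\<in>J. (u has_real_derivative u' t) (at t)) \<and>
     (\<forall>K. compact K \<and> K \<subseteq> J \<longrightarrow> (\<exists>L. L-lipschitz_on K u')) \<and>
     (AE t in lebesgue. t \<in> J \<longrightarrow>
        (\<exists>v. (u' has_real_derivative v) (at t) \<and> v + c * u' t + (b + a t) * u t = 0))"

end

theory Submission
  imports Defs
begin

text \<open>
  Along a solution, the quadratic form V = u'^2 + c u u' + q u^2 with q = b + a0 + c^2/2 satisfies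
  V' = -(c u'^2 + 2 (a - a0) u u' + c (b + a) u^2) almost everywhere. The shift a0 is chosen so
  that this dissipation form is positive definite uniformly for all values of a in [0, C]: its
  discriminant condition (a - a0)^2 < c^2 (b + a) is concave in a, and it can be met at both
  endpoints a = 0 and a = C because C < c sqrt b + c sqrt (b + C), which is how the hypothesis
  C < c max(c, 2 sqrt b) enters. Since V is comparable to u^2 + u'^2, this gives V' <= -delta V
  almost everywhere, so the Lipschitz function e^(delta t) V is nonincreasing.
\<close>

lemma quadratic_form_nonneg:
  fixes A B D x y :: real
  assumes "0 \<le> A" "0 \<le> D" "B\<^sup>2 \<le> A * D"
  shows "0 \<le> A * y\<^sup>2 + 2 * B * x * y + D * x\<^sup>2"
proof (cases "A = 0")
  case True
  then show ?thesis using assms by simp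
next
  case False
  then have "0 < A" using assms by simp
  have "A * (A * y\<^sup>2 + 2 * B * x * y + D * x\<^sup>2) = (A * y + B * x)\<^sup>2 + (A * D - B\<^sup>2) * x\<^sup>2"
    by (simp add: power2_eq_square algebra_simps)
  also have "\<dots> \<ge> 0" using assms by simp
  finally show ?thesis using \<open>0 < A\<close> by (simp add: zero_le_mult_iff)
qed

lemma quadratic_form_ge_sum_squares:
  fixes A B D \<epsilon> x y :: real
  assumes "\<epsilon> \<le> A" "\<epsilon> \<le> D" "B\<^sup>2 \<le> (A - \<epsilon>) * (D - \<epsilon>)"
  shows "\<epsilon> * (x\<^sup>2 + y\<^sup>2) \<le> A * y\<^sup>2 + 2 * B * x * y + D * x\<^sup>2"
  using quadratic_form_nonneg[where A="A - \<epsilon>" and D="D - \<epsilon>" and B=B and x=x and y=y] assms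
  by (simp add: algebra_simps)

lemma quadratic_form_le_sum_squares:
  fixes A B D \<Lambda> x y :: real
  assumes "A \<le> \<Lambda>" "D \<le> \<Lambda>" "B\<^sup>2 \<le> (\<Lambda> - A) * (\<Lambda> - D)"
  shows "A * y\<^sup>2 + 2 * B * x * y + D * x\<^sup>2 \<le> \<Lambda> * (x\<^sup>2 + y\<^sup>2)"
  using quadratic_form_nonneg[where A="\<Lambda> - A" and D="\<Lambda> - D" and B="- B" and x=x and y=y] assms
  by (simp add: algebra_simps)

lemma positive_definite_quadratic_form_bounds:
  fixes A B D :: real
  assumes "0 < A" "0 < D" "B\<^sup>2 < A * D"
  obtains \<kappa> K where "0 < \<kappa>" "0 < K"
    "\<And>x y. \<kappa> * (x\<^sup>2 + y\<^sup>2) \<le> A * y\<^sup>2 + 2 * B * x * y + D * x\<^sup>2"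
    "\<And>x y. A * y\<^sup>2 + 2 * B * x * y + D * x\<^sup>2 \<le> K * (x\<^sup>2 + y\<^sup>2)"
proof
  define \<kappa> where "\<kappa> = (A * D - B\<^sup>2) / (A + D)"
  have \<kappa>: "\<kappa> * (A + D) = A * D - B\<^sup>2" using assms by (simp add: \<kappa>_def)
  show "0 < \<kappa>" using assms by (simp add: \<kappa>_def)
  show "0 < A + D + \<bar>B\<bar>" using assms by simp
  fix x y
  have "\<kappa> * (A + D) \<le> A * (A + D)" "\<kappa> * (A + D) \<le> D * (A + D)"
    unfolding \<kappa> using assms by (simp_all add: power2_eq_square algebra_simps)
  moreover have "B\<^sup>2 \<le> (A - \<kappa>) * (D - \<kappa>)"
    using \<kappa> by (simp add: power2_eq_square algebra_simps)
  ultimately show "\<kappa> * (x\<^sup>2 + y\<^sup>2) \<le> A * y\<^sup>2 + 2 * B * x * y + D * x\<^sup>2"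
    using assms by (intro quadratic_form_ge_sum_squares) simp_all
  have "B\<^sup>2 \<le> (A + D + \<bar>B\<bar> - A) * (A + D + \<bar>B\<bar> - D)"
    using assms by (simp add: power2_eq_square algebra_simps)
  then show "A * y\<^sup>2 + 2 * B * x * y + D * x\<^sup>2 \<le> (A + D + \<bar>B\<bar>) * (x\<^sup>2 + y\<^sup>2)"
    using assms by (intro quadratic_form_le_sum_squares) simp_all
qed

lemma damping_bound_imp_sqrt_bound:
  fixes b c C :: real
  assumes "0 < b" "0 < c" "0 \<le> C" "C < c * max c (2 * sqrt b)"
  shows "C < c * sqrt b + c * sqrt (b + C)"
proof (cases "2 * sqrt b \<le> c")
  case True
  then have "C < c * c" using assms(4) by (simp add: max_def)
  then have "sqrt C < c" using real_sqrt_less_mono[of C "c * c"] \<open>0 < c\<close> by simp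
  then have "sqrt C * sqrt C \<le> c * sqrt C" using \<open>0 \<le> C\<close> by (intro mult_right_mono) simp_all
  also have "\<dots> \<le> c * sqrt (b + C)" using assms by simp
  finally have "C \<le> c * sqrt (b + C)" using \<open>0 \<le> C\<close> by simp
  moreover have "0 < c * sqrt b" using assms by simp
  ultimately show ?thesis by linarith
next
  case False
  then have "C < 2 * c * sqrt b" using assms(4) by (simp add: max_def)
  moreover have "c * sqrt b \<le> c * sqrt (b + C)" using assms by simp
  ultimately show ?thesis by linarith
qed

lemma exists_shift_with_margin:
  fixes b c C :: real
  assumes "0 < b" "0 < c" "0 \<le> C" "C < c * sqrt b + c * sqrt (b + C)"
  obtains a0 m where "0 \<le> a0" "0 < m"
    "\<And>\<alpha>. 0 \<le> \<alpha> \<Longrightarrow> \<alpha> \<le> C \<Longrightarrow> (\<alpha> - a0)\<^sup>2 + m \<le> c\<^sup>2 * (b + \<alpha>)"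
proof -
  define r1 where "r1 = c * sqrt b"
  define r2 where "r2 = c * sqrt (b + C)"
  have "0 < r1" "r1 \<le> r2" using assms by (simp_all add: r1_def r2_def)
  have r_sq: "r1\<^sup>2 = c\<^sup>2 * b" "r2\<^sup>2 = c\<^sup>2 * (b + C)"
    using assms by (simp_all add: r1_def r2_def power_mult_distrib)
  define a0 where "a0 = max 0 ((C - r2 + r1) / 2)"
  have "C < r1 + r2" using assms(4) by (simp add: r1_def r2_def)
  then have "a0 < r1" "C - r2 < a0" using \<open>0 < r1\<close> by (simp_all add: a0_def less_max_iff_disj)
  then have "\<bar>a0\<bar> < r1" "\<bar>C - a0\<bar> < r2"
    using assms(3) \<open>r1 \<le> r2\<close> by (simp_all add: a0_def abs_less_iff)
  then have "a0\<^sup>2 < r1\<^sup>2" "(C - a0)\<^sup>2 < r2\<^sup>2"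
    using \<open>0 < r1\<close> \<open>r1 \<le> r2\<close> by (metis abs_le_square_iff abs_of_pos not_le order_less_le_trans)+
  define m where "m = min (c\<^sup>2 * b - a0\<^sup>2) (c\<^sup>2 * (b + C) - (C - a0)\<^sup>2)"
  show ?thesis
  proof
    show "0 \<le> a0" by (simp add: a0_def)
    show "0 < m" using \<open>a0\<^sup>2 < r1\<^sup>2\<close> \<open>(C - a0)\<^sup>2 < r2\<^sup>2\<close> r_sq by (simp add: m_def)
    fix \<alpha> :: real
    assume "0 \<le> \<alpha>" "\<alpha> \<le> C"
    \<comment> \<open>the margin is a concave quadratic in \<open>\<alpha>\<close>, hence minimal at an endpoint\<close>
    have "c\<^sup>2 * (b + \<alpha>) - (\<alpha> - a0)\<^sup>2 - (c\<^sup>2 * b - a0\<^sup>2) = \<alpha> * (c\<^sup>2 - \<alpha> + 2 * a0)"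
      "c\<^sup>2 * (b + \<alpha>) - (\<alpha> - a0)\<^sup>2 - (c\<^sup>2 * (b + C) - (C - a0)\<^sup>2)
         = (C - \<alpha>) * (C + \<alpha> - 2 * a0 - c\<^sup>2)"
      by (simp_all add: power2_eq_square algebra_simps)
    moreover have "0 \<le> \<alpha> * (c\<^sup>2 - \<alpha> + 2 * a0) \<or> 0 \<le> (C - \<alpha>) * (C + \<alpha> - 2 * a0 - c\<^sup>2)"
      using \<open>0 \<le> \<alpha>\<close> \<open>\<alpha> \<le> C\<close> by (cases "0 \<le> c\<^sup>2 - \<alpha> + 2 * a0") simp_all
    ultimately show "(\<alpha> - a0)\<^sup>2 + m \<le> c\<^sup>2 * (b + \<alpha>)" unfolding m_def by linarith
  qed
qed

lemma uniform_coercivity: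
  fixes b c C :: real
  assumes "0 < b" "0 < c" "0 \<le> C" "C < c * max c (2 * sqrt b)"
  obtains a0 \<epsilon> where "0 \<le> a0" "0 < \<epsilon>"
    "\<And>\<alpha> x y. 0 \<le> \<alpha> \<Longrightarrow> \<alpha> \<le> C \<Longrightarrow>
       \<epsilon> * (x\<^sup>2 + y\<^sup>2) \<le> c * y\<^sup>2 + 2 * (\<alpha> - a0) * x * y + c * (b + \<alpha>) * x\<^sup>2"
proof -
  obtain a0 m where "0 \<le> a0" "0 < m"
    and margin: "\<And>\<alpha>. 0 \<le> \<alpha> \<Longrightarrow> \<alpha> \<le> C \<Longrightarrow> (\<alpha> - a0)\<^sup>2 + m \<le> c\<^sup>2 * (b + \<alpha>)"
    using exists_shift_with_margin[OF assms(1-3) damping_bound_imp_sqrt_bound[OF assms]] by blast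
  define \<epsilon> where "\<epsilon> = min (m / (c * (1 + b + C))) (min c (c * b))"
  have "0 < \<epsilon>" using \<open>0 < m\<close> assms by (simp add: \<epsilon>_def)
  have "\<epsilon> * (c * (1 + b + C)) \<le> m"
    using assms by (simp add: \<epsilon>_def pos_le_divide_eq[symmetric] add_pos_nonneg)
  have "\<epsilon> * (x\<^sup>2 + y\<^sup>2) \<le> c * y\<^sup>2 + 2 * (\<alpha> - a0) * x * y + c * (b + \<alpha>) * x\<^sup>2"
    if "0 \<le> \<alpha>" "\<alpha> \<le> C" for \<alpha> x y
  proof (rule quadratic_form_ge_sum_squares)
    show "\<epsilon> \<le> c" by (simp add: \<epsilon>_def)
    have "c * b \<le> c * (b + \<alpha>)" using that assms by simp
    then show "\<epsilon> \<le> c * (b + \<alpha>)" by (simp add: \<epsilon>_def)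
    have "\<epsilon> * (c * (1 + b + \<alpha>)) \<le> \<epsilon> * (c * (1 + b + C))"
      using that assms \<open>0 < \<epsilon>\<close> by simp
    then have "(\<alpha> - a0)\<^sup>2 \<le> c\<^sup>2 * (b + \<alpha>) - \<epsilon> * (c * (1 + b + \<alpha>))"
      using margin[OF that] \<open>\<epsilon> * (c * (1 + b + C)) \<le> m\<close> by linarith
    also have "\<dots> \<le> (c - \<epsilon>) * (c * (b + \<alpha>) - \<epsilon>)"
      by (simp add: power2_eq_square algebra_simps)
    finally show "(\<alpha> - a0)\<^sup>2 \<le> (c - \<epsilon>) * (c * (b + \<alpha>) - \<epsilon>)" .
  qed
  with \<open>0 \<le> a0\<close> \<open>0 < \<epsilon>\<close> that show ?thesis by blast
qed

definition lyapunov_form :: "real \<Rightarrow> real \<Rightarrow> real \<Rightarrow> real \<Rightarrow> real" where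
  "lyapunov_form c q x y = y\<^sup>2 + c * x * y + q * x\<^sup>2"

lemma lyapunov_form_bounds:
  fixes c q :: real
  assumes "c\<^sup>2 < 4 * q"
  obtains \<kappa> K where "0 < \<kappa>" "0 < K"
    "\<And>x y. \<kappa> * (x\<^sup>2 + y\<^sup>2) \<le> lyapunov_form c q x y"
    "\<And>x y. lyapunov_form c q x y \<le> K * (x\<^sup>2 + y\<^sup>2)"
proof -
  have "0 < q" using assms by (smt (verit) zero_le_power2)
  moreover have "(c / 2)\<^sup>2 < 1 * q" using assms by (simp add: power_divide)
  moreover have "lyapunov_form c q x y = 1 * y\<^sup>2 + 2 * (c / 2) * x * y + q * x\<^sup>2" for x y
    by (simp add: lyapunov_form_def)
  ultimately show ?thesis
    using positive_definite_quadratic_form_bounds[of 1 q "c / 2"] that by (metis zero_less_one)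
qed

lemma exists_strict_lyapunov_form:
  fixes b c C :: real
  assumes "0 < b" "0 < c" "0 \<le> C" "C < c * max c (2 * sqrt b)"
  obtains \<delta> \<kappa> K a0 where "0 < \<delta>" "0 < \<kappa>" "0 < K"
    "\<And>x y. \<kappa> * (x\<^sup>2 + y\<^sup>2) \<le> lyapunov_form c (b + a0 + c\<^sup>2 / 2) x y"
    "\<And>x y. lyapunov_form c (b + a0 + c\<^sup>2 / 2) x y \<le> K * (x\<^sup>2 + y\<^sup>2)"
    "\<And>\<alpha> x y. 0 \<le> \<alpha> \<Longrightarrow> \<alpha> \<le> C \<Longrightarrow> \<delta> * lyapunov_form c (b + a0 + c\<^sup>2 / 2) x y
       \<le> c * y\<^sup>2 + 2 * (\<alpha> - a0) * x * y + c * (b + \<alpha>) * x\<^sup>2"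
proof -
  obtain a0 \<epsilon> where "0 \<le> a0" "0 < \<epsilon>" and coercive: "\<And>\<alpha> x y. 0 \<le> \<alpha> \<Longrightarrow> \<alpha> \<le> C \<Longrightarrow>
      \<epsilon> * (x\<^sup>2 + y\<^sup>2) \<le> c * y\<^sup>2 + 2 * (\<alpha> - a0) * x * y + c * (b + \<alpha>) * x\<^sup>2"
    using uniform_coercivity[OF assms] by blast
  define q where "q = b + a0 + c\<^sup>2 / 2"
  have "c\<^sup>2 < 4 * q" using \<open>0 < b\<close> \<open>0 \<le> a0\<close> by (simp add: q_def add_nonneg_pos)
  then obtain \<kappa> K where "0 < \<kappa>" "0 < K"
    and lower: "\<And>x y. \<kappa> * (x\<^sup>2 + y\<^sup>2) \<le> lyapunov_form c q x y"
    and upper: "\<And>x y. lyapunov_form c q x y \<le> K * (x\<^sup>2 + y\<^sup>2)"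
    using lyapunov_form_bounds by blast
  have "\<epsilon> / K * lyapunov_form c q x y \<le> c * y\<^sup>2 + 2 * (\<alpha> - a0) * x * y + c * (b + \<alpha>) * x\<^sup>2"
    if "0 \<le> \<alpha>" "\<alpha> \<le> C" for \<alpha> x y
  proof -
    have "\<epsilon> / K * lyapunov_form c q x y \<le> \<epsilon> / K * (K * (x\<^sup>2 + y\<^sup>2))"
      using \<open>0 < \<epsilon>\<close> \<open>0 < K\<close> by (intro mult_left_mono[OF upper]) simp
    also have "\<dots> = \<epsilon> * (x\<^sup>2 + y\<^sup>2)" using \<open>0 < K\<close> by simp
    finally show ?thesis using coercive[OF that, of x y] by linarith
  qed
  with \<open>0 < \<epsilon>\<close> \<open>0 < \<kappa>\<close> \<open>0 < K\<close> lower upper that[of "\<epsilon> / K" \<kappa> K a0] show ?thesis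
    unfolding q_def by simp
qed

lemma lyapunov_form_has_derivative:
  assumes "q = b + a0 + c\<^sup>2 / 2"
    and "(u has_real_derivative u' t) (at t)" "(u' has_real_derivative v) (at t)"
    and "v + c * u' t + (b + \<alpha>) * u t = 0"
  shows "((\<lambda>t. lyapunov_form c q (u t) (u' t)) has_real_derivative
           - (c * (u' t)\<^sup>2 + 2 * (\<alpha> - a0) * u t * u' t + c * (b + \<alpha>) * (u t)\<^sup>2)) (at t)"
proof -
  have "((\<lambda>t. lyapunov_form c q (u t) (u' t)) has_real_derivative
      2 * u' t * v + c * (u' t * u' t + u t * v) + 2 * q * u t * u' t) (at t)"
    unfolding lyapunov_form_def
    by (rule derivative_eq_intros assms(2,3) refl | simp add: power2_eq_square algebra_simps)+
  moreover have "v = - c * u' t - (b + \<alpha>) * u t" using assms(4) by linarith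
  ultimately show ?thesis by (simp add: assms(1) power2_eq_square algebra_simps)
qed

lemma AE_lebesgue_obtain_negligible:
  assumes "AE x in lebesgue. P x"
  obtains N where "negligible N" "\<And>x. x \<notin> N \<Longrightarrow> P x"
proof -
  from assms obtain N where "{x \<in> space lebesgue. \<not> P x} \<subseteq> N"
    and "emeasure lebesgue N = 0" "N \<in> sets lebesgue"
    by (rule AE_E)
  moreover have "negligible N"
    using \<open>emeasure lebesgue N = 0\<close> \<open>N \<in> sets lebesgue\<close> by (simp add: negligible_iff_null_sets null_setsI)
  ultimately show ?thesis using that by auto
qed

lemma lipschitz_on_mult:
  fixes f g :: "'a::metric_space \<Rightarrow> real"
  assumes "compact K" "L1-lipschitz_on K f" "L2-lipschitz_on K g"
  shows "\<exists>L. L-lipschitz_on K (\<lambda>x. f x * g x)"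
proof -
  have "bounded (f ` K)" "bounded (g ` K)"
    using assms by (auto intro!: compact_imp_bounded compact_continuous_image lipschitz_on_continuous_on)
  then obtain B1 B2 where "0 < B1" "0 < B2"
    and B1: "\<And>x. x \<in> K \<Longrightarrow> \<bar>f x\<bar> \<le> B1" and B2: "\<And>x. x \<in> K \<Longrightarrow> \<bar>g x\<bar> \<le> B2"
    by (auto simp: bounded_pos)
  have "0 \<le> L1" "0 \<le> L2" using assms by (auto intro: lipschitz_on_nonneg)
  show ?thesis
  proof (intro exI lipschitz_onI)
    show "0 \<le> B1 * L2 + B2 * L1" using \<open>0 < B1\<close> \<open>0 < B2\<close> \<open>0 \<le> L1\<close> \<open>0 \<le> L2\<close> by simp
    fix x y assume xy: "x \<in> K" "y \<in> K"
    have "f x * g x - f y * g y = f x * (g x - g y) + g y * (f x - f y)"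
      by (simp add: algebra_simps)
    then have "\<bar>f x * g x - f y * g y\<bar> \<le> \<bar>f x\<bar> * \<bar>g x - g y\<bar> + \<bar>g y\<bar> * \<bar>f x - f y\<bar>"
      by (metis abs_mult abs_triangle_ineq)
    also have "\<dots> \<le> B1 * (L2 * dist x y) + B2 * (L1 * dist x y)"
      using lipschitz_onD[OF assms(2) xy] lipschitz_onD[OF assms(3) xy] B1 B2 xy \<open>0 < B1\<close> \<open>0 < B2\<close>
      by (intro add_mono mult_mono) (auto simp: dist_real_def)
    finally show "dist (f x * g x) (f y * g y) \<le> (B1 * L2 + B2 * L1) * dist x y"
      by (simp add: dist_real_def algebra_simps)
  qed
qed

lemma lipschitz_on_Icc_if_continuous_deriv:
  fixes f f' :: "real \<Rightarrow> real"
  assumes "\<And>x. x \<in> {s..t} \<Longrightarrow> (f has_real_derivative f' x) (at x)"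
    and "continuous_on {s..t} f'"
  shows "\<exists>L. L-lipschitz_on {s..t} f"
proof -
  obtain B where "0 < B" and B: "\<And>x. x \<in> {s..t} \<Longrightarrow> \<bar>f' x\<bar> \<le> B"
    using compact_imp_bounded[OF compact_continuous_image[OF assms(2)]]
    by (force simp: bounded_pos)
  have "B-lipschitz_on {s..t} f"
  proof (rule lipschitz_onI)
    fix x y assume "x \<in> {s..t}" "y \<in> {s..t}"
    then show "dist (f x) (f y) \<le> B * dist x y"
      using field_differentiable_bound[of "{s..t}" f f' B] assms(1) B
      by (simp add: dist_norm has_field_derivative_at_within)
  qed (use \<open>0 < B\<close> in simp)
  then show ?thesis ..
qed

lemma exists_last_point_at_level:
  fixes f :: "real \<Rightarrow> real"
  assumes "continuous_on {s..t} f" "s \<le> t" "f s \<le> y" "y < f t"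
  obtains z where "z \<in> {s..<t}" "f z = y" "\<And>x. x \<in> {z<..t} \<Longrightarrow> y < f x"
proof -
  define A where "A = {x \<in> {s..t}. f x \<le> y}"
  have "closed A" unfolding A_def
    by (rule continuous_on_closed_Collect_le[OF assms(1) continuous_on_const]) simp
  have "s \<in> A" "bdd_above A" using assms by (auto simp: A_def intro: bdd_aboveI[of _ t])
  define z where "z = Sup A"
  have "z \<in> A"
    unfolding z_def using closed_contains_Sup \<open>closed A\<close> \<open>s \<in> A\<close> \<open>bdd_above A\<close> by blast
  have above: "y < f x" if "x \<in> {z<..t}" for x
  proof -
    have "x \<notin> A" using that cSup_upper[OF _ \<open>bdd_above A\<close>] by (force simp: z_def)
    then show ?thesis using that \<open>z \<in> A\<close> by (auto simp: A_def)
  qed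
  have "z \<in> {s..<t}" "f z \<le> y" using \<open>z \<in> A\<close> assms(4) by (auto simp: A_def le_less)
  moreover have "f z = y"
  proof -
    have "continuous_on {z..t} f"
      using \<open>z \<in> {s..<t}\<close> by (auto intro: continuous_on_subset[OF assms(1)])
    then obtain x where "z \<le> x" "x \<le> t" "f x = y"
      using IVT'[of f z y t] \<open>f z \<le> y\<close> assms(4) \<open>z \<in> {s..<t}\<close> by auto
    moreover have "\<not> z < x" using above[of x] \<open>f x = y\<close> \<open>x \<le> t\<close> by auto
    ultimately show ?thesis by simp
  qed
  ultimately show ?thesis using that above by blast
qed

lemma negligible_lipschitz_image:
  fixes f :: "'M::euclidean_space \<Rightarrow> 'N::euclidean_space"
  assumes "DIM('M) \<le> DIM('N)" "L-lipschitz_on A f" "negligible S" "S \<subseteq> A"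
  shows "negligible (f ` S)"
proof (rule negligible_locally_Lipschitz_image[OF assms(1,3)])
  fix x assume "x \<in> S"
  show "\<exists>T B. open T \<and> x \<in> T \<and> (\<forall>y\<in>S \<inter> T. norm (f y - f x) \<le> B * norm (y - x))"
  proof (intro exI[of _ UNIV] exI[of _ L] conjI ballI)
    fix y assume "y \<in> S \<inter> UNIV"
    then show "norm (f y - f x) \<le> L * norm (y - x)"
      using lipschitz_onD[OF assms(2)] \<open>x \<in> S\<close> assms(4) by (auto simp: dist_norm)
  qed auto
qed

lemma lipschitz_deriv_neg_ae_imp_le:
  fixes f :: "real \<Rightarrow> real"
  assumes "s \<le> t" and lip: "L-lipschitz_on {s..t} f" and "negligible N"
    and deriv: "\<And>x. x \<in> {s<..<t} \<Longrightarrow> x \<notin> N \<Longrightarrow> \<exists>D<0. (f has_real_derivative D) (at x)"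
  shows "f t \<le> f s"
proof (rule ccontr)
  assume "\<not> f t \<le> f s"
  define S where "S = ({s, t} \<union> N) \<inter> {s..t}"
  have "negligible S" unfolding S_def
    using \<open>negligible N\<close> by (auto intro: negligible_subset[of "{s, t} \<union> N"])
  have "negligible (f ` S)"
    using negligible_lipschitz_image[OF _ lip \<open>negligible S\<close>] by (auto simp: S_def)
  \<comment> \<open>each value in \<open>{f s<..<f t}\<close> is attained at a last point,
    where \<open>f\<close> cannot have a negative derivative\<close>
  moreover have "{f s<..<f t} \<subseteq> f ` S"
  proof
    fix y assume "y \<in> {f s<..<f t}"
    then have "f s \<le> y" "y < f t" by auto
    then obtain z where z: "z \<in> {s..<t}" "f z = y" and above: "\<And>x. x \<in> {z<..t} \<Longrightarrow> y < f x"
      using exists_last_point_at_level[OF lipschitz_on_continuous_on[OF lip] \<open>s \<le> t\<close>] by blast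
    have "z \<in> S"
    proof (rule ccontr)
      assume "z \<notin> S"
      then obtain D where "D < 0" "(f has_real_derivative D) (at z)"
        using deriv z by (force simp: S_def)
      then obtain d where "0 < d" and d: "\<And>h. 0 < h \<Longrightarrow> h < d \<Longrightarrow> f (z + h) < f z"
        using DERIV_neg_dec_right by blast
      define h where "h = min d (t - z) / 2"
      have "0 < h" "h < d" "z + h \<le> t" using \<open>0 < d\<close> z unfolding h_def by (auto simp: min_def field_simps)
      then show False using d above[of "z + h"] z by fastforce
    qed
    then show "y \<in> f ` S" using z by blast
  qed
  ultimately have "negligible {f s<..<f t}" by (rule negligible_subset)
  then show False using \<open>\<not> f t \<le> f s\<close> by (simp add: negligible_interval box_eq_empty flip: box_real)
qed

lemma lipschitz_deriv_nonpos_ae_imp_le: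
  fixes f :: "real \<Rightarrow> real"
  assumes "s \<le> t" and lip: "L-lipschitz_on {s..t} f" and "negligible N"
    and deriv: "\<And>x. x \<in> {s<..<t} \<Longrightarrow> x \<notin> N \<Longrightarrow> \<exists>D\<le>0. (f has_real_derivative D) (at x)"
  shows "f t \<le> f s"
proof (rule ccontr)
  assume "\<not> f t \<le> f s"
  with \<open>s \<le> t\<close> have "s < t" by (cases "s = t") auto
  define e where "e = (f t - f s) / (2 * (t - s))"
  have "0 < e" using \<open>\<not> f t \<le> f s\<close> \<open>s < t\<close> by (simp add: e_def)
  have "(\<lambda>x. f x - e * x) t \<le> (\<lambda>x. f x - e * x) s"
  proof (rule lipschitz_deriv_neg_ae_imp_le[OF \<open>s \<le> t\<close> _ \<open>negligible N\<close>])
    show "(L + \<bar>e\<bar> * 1)-lipschitz_on {s..t} (\<lambda>x. f x - e * x)"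
      by (intro lipschitz_intros lip)
    fix x assume "x \<in> {s<..<t}" "x \<notin> N"
    then obtain D where "D \<le> 0" "(f has_real_derivative D) (at x)" using deriv by blast
    then have "((\<lambda>x. f x - e * x) has_real_derivative D - e) (at x)"
      by (auto intro!: derivative_eq_intros)
    then show "\<exists>D<0. ((\<lambda>x. f x - e * x) has_real_derivative D) (at x)"
      using \<open>D \<le> 0\<close> \<open>0 < e\<close> by (intro exI[of _ "D - e"]) auto
  qed
  then have "f t - f s \<le> e * (t - s)" by (simp add: algebra_simps)
  also have "\<dots> = (f t - f s) / 2" using \<open>s < t\<close> by (simp add: e_def field_simps)
  finally show False using \<open>\<not> f t \<le> f s\<close> by simp
qed

lemma W2inf_loc_solution_lipschitz_on_Icc:
  assumes "W2inf_loc_solution J b c a u u'" "{s..t} \<subseteq> J"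
  shows "\<exists>L. L-lipschitz_on {s..t} u" "\<exists>L. L-lipschitz_on {s..t} u'"
proof -
  show "\<exists>L. L-lipschitz_on {s..t} u'"
    using assms unfolding W2inf_loc_solution_def by blast
  then have "continuous_on {s..t} u'" by (metis lipschitz_on_continuous_on)
  moreover have "\<And>x. x \<in> {s..t} \<Longrightarrow> (u has_real_derivative u' x) (at x)"
    using assms unfolding W2inf_loc_solution_def by blast
  ultimately show "\<exists>L. L-lipschitz_on {s..t} u"
    by (rule lipschitz_on_Icc_if_continuous_deriv[rotated])
qed

lemma W2inf_loc_solution_lyapunov_lipschitz:
  assumes "W2inf_loc_solution J b c a u u'" "{s..t} \<subseteq> J"
  shows "\<exists>L. L-lipschitz_on {s..t} (\<lambda>x. lyapunov_form c q (u x) (u' x) * exp (\<delta> * x))"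
proof -
  obtain Lu Lu' where Lu: "Lu-lipschitz_on {s..t} u" and Lu': "Lu'-lipschitz_on {s..t} u'"
    using W2inf_loc_solution_lipschitz_on_Icc[OF assms] by blast
  obtain L1 L2 L3 where "L1-lipschitz_on {s..t} (\<lambda>x. u' x * u' x)"
    "L2-lipschitz_on {s..t} (\<lambda>x. u x * u' x)" "L3-lipschitz_on {s..t} (\<lambda>x. u x * u x)"
    using lipschitz_on_mult[OF compact_Icc Lu' Lu'] lipschitz_on_mult[OF compact_Icc Lu Lu']
      lipschitz_on_mult[OF compact_Icc Lu Lu] by blast
  then have LV: "(L1 + \<bar>c\<bar> * L2 + \<bar>q\<bar> * L3)-lipschitz_on {s..t}
      (\<lambda>x. lyapunov_form c q (u x) (u' x))"
    unfolding lyapunov_form_def power2_eq_square mult.assoc by (intro lipschitz_intros)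
  have "\<exists>L. L-lipschitz_on {s..t} (\<lambda>x. exp (\<delta> * x))"
    by (rule lipschitz_on_Icc_if_continuous_deriv[where f'="\<lambda>x. exp (\<delta> * x) * \<delta>"])
      (auto intro!: derivative_eq_intros continuous_intros)
  then show ?thesis using lipschitz_on_mult[OF compact_Icc LV] by blast
qed

lemma W2inf_loc_solution_lyapunov_decay:
  fixes a :: "real \<Rightarrow> real" and a0 b c q C \<delta> :: real
  assumes sol: "W2inf_loc_solution J b c a u u'" and "is_interval J"
    and a_bounds: "AE t in lebesgue. t \<in> J \<longrightarrow> 0 \<le> a t \<and> a t \<le> C"
    and q: "q = b + a0 + c\<^sup>2 / 2"
    and dissipation: "\<And>\<alpha> x y. 0 \<le> \<alpha> \<Longrightarrow> \<alpha> \<le> C \<Longrightarrow>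
      \<delta> * lyapunov_form c q x y \<le> c * y\<^sup>2 + 2 * (\<alpha> - a0) * x * y + c * (b + \<alpha>) * x\<^sup>2"
    and "s \<in> J" "t \<in> J" "s \<le> t"
  shows "lyapunov_form c q (u t) (u' t) \<le> lyapunov_form c q (u s) (u' s) * exp (- \<delta> * (t - s))"
proof -
  define V where "V x = lyapunov_form c q (u x) (u' x)" for x
  define W where "W x = V x * exp (\<delta> * x)" for x
  have "{s..t} \<subseteq> J"
    using mem_is_interval_1_I[OF \<open>is_interval J\<close> \<open>s \<in> J\<close> \<open>t \<in> J\<close>] by auto
  have du: "\<And>x. x \<in> J \<Longrightarrow> (u has_real_derivative u' x) (at x)"
    and ode: "AE x in lebesgue. x \<in> J \<longrightarrow>
      (\<exists>v. (u' has_real_derivative v) (at x) \<and> v + c * u' x + (b + a x) * u x = 0)"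
    using sol unfolding W2inf_loc_solution_def by blast+
  obtain N where "negligible N" and N: "\<And>x. x \<notin> N \<Longrightarrow> (x \<in> J \<longrightarrow>
      (\<exists>v. (u' has_real_derivative v) (at x) \<and> v + c * u' x + (b + a x) * u x = 0)) \<and>
      (x \<in> J \<longrightarrow> 0 \<le> a x \<and> a x \<le> C)"
    using AE_lebesgue_obtain_negligible[OF AE_conjI[OF ode a_bounds]] by blast
  obtain LW where LW: "LW-lipschitz_on {s..t} W"
    using W2inf_loc_solution_lyapunov_lipschitz[OF sol \<open>{s..t} \<subseteq> J\<close>] unfolding W_def V_def by blast
  have "\<exists>D\<le>0. (W has_real_derivative D) (at x)" if "x \<in> {s<..<t}" "x \<notin> N" for x
  proof -
    have "x \<in> J" using that \<open>{s..t} \<subseteq> J\<close> by auto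
    then obtain v where v: "(u' has_real_derivative v) (at x)" "v + c * u' x + (b + a x) * u x = 0"
      and "0 \<le> a x" "a x \<le> C"
      using N[OF \<open>x \<notin> N\<close>] \<open>x \<in> J\<close> by blast
    define Q where "Q = c * (u' x)\<^sup>2 + 2 * (a x - a0) * u x * u' x + c * (b + a x) * (u x)\<^sup>2"
    have "(V has_real_derivative - Q) (at x)"
      unfolding V_def Q_def by (rule lyapunov_form_has_derivative[OF q du[OF \<open>x \<in> J\<close>] v])
    then have "(W has_real_derivative (\<delta> * V x - Q) * exp (\<delta> * x)) (at x)"
      unfolding W_def by (auto intro!: derivative_eq_intros simp: algebra_simps)
    moreover have "(\<delta> * V x - Q) * exp (\<delta> * x) \<le> 0"
      using dissipation[OF \<open>0 \<le> a x\<close> \<open>a x \<le> C\<close>] by (simp add: V_def Q_def mult_nonpos_nonneg)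
    ultimately show ?thesis by blast
  qed
  then have "W t \<le> W s" by (rule lipschitz_deriv_nonpos_ae_imp_le[OF \<open>s \<le> t\<close> LW \<open>negligible N\<close>])
  then have "W t * exp (- \<delta> * t) \<le> W s * exp (- \<delta> * t)" by simp
  then show ?thesis by (simp add: W_def V_def mult.assoc flip: exp_add) (simp add: algebra_simps)
qed

theorem theorem2p1:
  fixes J :: "real set" and a :: "real \<Rightarrow> real" and b c C :: real
  assumes "b > 0" and "c > 0"
    and "open J" and "is_interval J" and "J \<noteq> {}"
    and "a \<in> borel_measurable (restrict_space lebesgue J)"
    and "AE t in lebesgue. t \<in> J \<longrightarrow> 0 \<le> a t \<and> a t \<le> C"
    and "C \<ge> 0" and "C < c * max c (2 * sqrt b)"
  shows "\<exists>\<delta>>0. \<exists>M>0. \<forall>u u'. W2inf_loc_solution J b c a u u' \<longrightarrow>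
           (\<forall>s\<in>J. \<forall>t\<in>J. s \<le> t \<longrightarrow>
              (u t)\<^sup>2 + (u' t)\<^sup>2 \<le> M * ((u s)\<^sup>2 + (u' s)\<^sup>2) * exp (- \<delta> * (t - s)))"
proof -
  obtain \<delta> \<kappa> K a0 where "0 < \<delta>" "0 < \<kappa>" "0 < K"
    and lower: "\<And>x y. \<kappa> * (x\<^sup>2 + y\<^sup>2) \<le> lyapunov_form c (b + a0 + c\<^sup>2 / 2) x y"
    and upper: "\<And>x y. lyapunov_form c (b + a0 + c\<^sup>2 / 2) x y \<le> K * (x\<^sup>2 + y\<^sup>2)"
    and dissipation: "\<And>\<alpha> x y. 0 \<le> \<alpha> \<Longrightarrow> \<alpha> \<le> C \<Longrightarrow> \<delta> * lyapunov_form c (b + a0 + c\<^sup>2 / 2) x y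
       \<le> c * y\<^sup>2 + 2 * (\<alpha> - a0) * x * y + c * (b + \<alpha>) * x\<^sup>2"
    using exists_strict_lyapunov_form[OF assms(1,2,8,9)] by metis
  show ?thesis
  proof (rule exI[of _ \<delta>], intro conjI exI[of _ "K / \<kappa>"] allI impI ballI)
    show "0 < \<delta>" "0 < K / \<kappa>" using \<open>0 < \<delta>\<close> \<open>0 < \<kappa>\<close> \<open>0 < K\<close> by simp_all
    fix u u' s t
    assume sol: "W2inf_loc_solution J b c a u u'" and st: "s \<in> J" "t \<in> J" "s \<le> t"
    have "\<kappa> * ((u t)\<^sup>2 + (u' t)\<^sup>2) \<le> lyapunov_form c (b + a0 + c\<^sup>2 / 2) (u t) (u' t)"
      by (rule lower)
    also have "\<dots> \<le> lyapunov_form c (b + a0 + c\<^sup>2 / 2) (u s) (u' s) * exp (- \<delta> * (t - s))"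
      by (rule W2inf_loc_solution_lyapunov_decay[OF sol assms(4,7) refl dissipation st])
    also have "\<dots> \<le> K * ((u s)\<^sup>2 + (u' s)\<^sup>2) * exp (- \<delta> * (t - s))"
      using upper by (simp add: mult_right_mono)
    finally show "(u t)\<^sup>2 + (u' t)\<^sup>2 \<le> K / \<kappa> * ((u s)\<^sup>2 + (u' s)\<^sup>2) * exp (- \<delta> * (t - s))"
      using \<open>0 < \<kappa>\<close> by (simp add: field_simps)
  qed
qed

end
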